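(* Let $a,a^{+}$ be boson operators with $aa^{+}-a^{+}a=1$ and let $\lambda$ be a nonzero real number. For all integers $m,n\ge0$, \[ (a^{+}a)_{m+n,\lambda}=\sum_{j=0}^{m}{m\brace j}_\lambda (a^{+})^{j}\,(a^{+}a+j-m\lambda)_{n,\lambda}\,a^{j}. \]
   Context: For an operator $X$ and real $\lambda\neq0$, $(X)_{0,\lambda}=1$ and $(X)_{n,\lambda}=X(X-\lambda)\cdots(X-(n-1)\lambda)$ for $n\ge1$ (scalars mean multiples of the identity). The degenerate Stirling numbers of the second kind ${n\brace k}_\lambda$ are defined by $(x)_{n,\lambda}=\sum_{k=0}^{n}{n\brace k}_\lambda (x)_k$, where $(x)_k=x(x-1)\cdots(x-k+1)$. *)

theory Defs
  imports Complex_Main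
begin

primrec dfall :: "'a::real_algebra_1 \<Rightarrow> nat \<Rightarrow> real \<Rightarrow> 'a" where
  "dfall X 0 l = 1"
| "dfall X (Suc n) l = dfall X n l * (X - of_real (real n * l))"

definition falling :: "real \<Rightarrow> nat \<Rightarrow> real" where
  "falling x k = (\<Prod>i<k. x - real i)"

definition dstirling :: "nat \<Rightarrow> nat \<Rightarrow> real \<Rightarrow> real" where
  "dstirling n k l = (THE c. (\<forall>x::real. dfall x n l = (\<Sum>j=0..n. c j * falling x j))
                          \<and> (\<forall>j>n. c j = 0)) k"

end

theory Submission
  imports Defs
begin

text \<open>Write N = a+ a. Induction on m: use (N)_{m+1+n} = (N)_{m+(n+1)} and peel off the first
  factor of (N + j - m\<lambda>)_{n+1} = (N + j - m\<lambda>) (N + j - (m+1)\<lambda>)_n. The commutation rule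
  a f(N) = f(N + 1) a turns the term (a+)^j N (\<dots>) a^j into (a+)^(j+1) (\<dots>) a^(j+1).
  The two resulting sums recombine by exactly the triangular recurrence of the degenerate
  Stirling numbers. The same recurrence arises from
  (x)_{n+1,\<lambda>} = (x)_{n,\<lambda>} (x - n\<lambda>) on the scalar side, which identifies the recursively
  defined numbers with the coefficients of the expansion in the falling factorial basis.
  Nothing uses \<lambda> \<noteq> 0: the identity also holds in the non-degenerate case \<lambda> = 0.\<close>

primrec dstirling_rec :: "nat \<Rightarrow> nat \<Rightarrow> real \<Rightarrow> real" where
  "dstirling_rec 0 k l = (if k = 0 then 1 else 0)"
| "dstirling_rec (Suc n) k l =
     (if k = 0 then 0 else dstirling_rec n (k - 1) l) + (real k - real n * l) * dstirling_rec n k l"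

lemma dstirling_rec_eq_0: "n < k \<Longrightarrow> dstirling_rec n k l = 0"
  by (induction n arbitrary: k) auto

lemma sum_dstirling_rec_Suc:
  fixes g :: "nat \<Rightarrow> 'a::real_algebra_1"
  shows "(\<Sum>k=0..Suc m. of_real (dstirling_rec (Suc m) k l) * g k) =
    (\<Sum>j=0..m. of_real (dstirling_rec m j l) * (g (Suc j) + of_real (real j - real m * l) * g j))"
proof -
  let ?S = "\<lambda>j. dstirling_rec m j l"
  have shifted: "(\<Sum>k=0..Suc m. of_real (if k = 0 then 0 else ?S (k - 1)) * g k)
      = (\<Sum>j=0..m. of_real (?S j) * g (Suc j))"
    by (subst sum.atLeast0_atMost_Suc_shift) simp
  have diagonal: "(\<Sum>k=0..Suc m. of_real ((real k - real m * l) * ?S k) * g k)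
      = (\<Sum>j=0..m. of_real (?S j) * (of_real (real j - real m * l) * g j))"
    by (simp add: dstirling_rec_eq_0 of_real_mult mult_ac)
  show ?thesis
    using shifted diagonal
    by (simp add: distrib_left distrib_right sum.distrib del: of_real_mult)
qed

lemma falling_Suc: "falling x (Suc j) = falling x j * (x - real j)"
  by (simp add: falling_def)

lemma dfall_eq_sum_falling: "dfall x n l = (\<Sum>j=0..n. dstirling_rec n j l * falling x j)"
proof (induction n)
  case 0
  then show ?case by (simp add: falling_def)
next
  case (Suc n)
  have "dfall x (Suc n) l = (\<Sum>j=0..n. dstirling_rec n j l * falling x j) * (x - real n * l)"
    using Suc by simp
  also have "\<dots> = (\<Sum>j=0..n. dstirling_rec n j l
      * (falling x (Suc j) + (real j - real n * l) * falling x j))"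
    by (subst sum_distrib_right, rule sum.cong) (simp_all add: falling_Suc algebra_simps)
  also have "\<dots> = (\<Sum>k=0..Suc n. dstirling_rec (Suc n) k l * falling x k)"
    using sum_dstirling_rec_Suc[of n l "falling x"] by simp
  finally show ?case .
qed

text \<open>Evaluating at x = i kills every (x)_j with j > i, so the coefficients vanish one by one.\<close>
lemma falling_expansion_eq_0_imp_coeff_eq_0:
  assumes "\<And>x. (\<Sum>j=0..n. e j * falling x j) = 0" and "i \<le> n"
  shows "e i = 0"
  using assms(2)
proof (induction i rule: less_induct)
  case (less i)
  have others: "e j * falling (real i) j = 0" if "j \<le> n" "j \<noteq> i" for j
  proof (cases "j < i")
    case True
    then show ?thesis using less.IH that by simp
  next
    case False
    then have "i < j" using that by simp
    then show ?thesis unfolding falling_def by (simp add: prod_zero)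
  qed
  have "(\<Sum>j\<in>{0..n} - {i}. e j * falling (real i) j) = 0"
    using others by (intro sum.neutral) simp
  then have "(\<Sum>j=0..n. e j * falling (real i) j) = e i * falling (real i) i"
    using less.prems by (simp add: sum.remove[of _ i])
  moreover have "falling (real i) i \<noteq> 0"
    unfolding falling_def by simp
  ultimately show ?case using assms(1)[of "real i"] by simp
qed

lemma dstirling_eq_dstirling_rec: "dstirling n k l = dstirling_rec n k l"
proof -
  have "(THE c. (\<forall>x::real. dfall x n l = (\<Sum>j=0..n. c j * falling x j)) \<and> (\<forall>j>n. c j = 0))
        = (\<lambda>k. dstirling_rec n k l)"
  proof (rule the_equality)
    fix c
    assume c: "(\<forall>x::real. dfall x n l = (\<Sum>j=0..n. c j * falling x j)) \<and> (\<forall>j>n. c j = 0)"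
    have "\<And>x. (\<Sum>j=0..n. (c j - dstirling_rec n j l) * falling x j) = 0"
      using c by (simp add: dfall_eq_sum_falling sum_subtractf left_diff_distrib)
    then have low: "c j - dstirling_rec n j l = 0" if "j \<le> n" for j
      using that by (rule falling_expansion_eq_0_imp_coeff_eq_0)
    show "c = (\<lambda>k. dstirling_rec n k l)"
    proof
      fix j
      show "c j = dstirling_rec n j l"
        using low[of j] c dstirling_rec_eq_0[of n j l] by (cases "j \<le> n") simp_all
    qed
  qed (simp add: dfall_eq_sum_falling dstirling_rec_eq_0)
  then show ?thesis unfolding dstirling_def by simp
qed

lemma of_real_mult_commute: "of_real r * (x::'a::real_algebra_1) = x * of_real r"
  by (simp add: of_real_def)

lemma dfall_Suc_left: "dfall X (Suc n) l = X * dfall (X - of_real l) n l"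
proof (induction n)
  case (Suc n)
  then show ?case by (simp add: algebra_simps)
qed simp

lemma dfall_intertwine:
  fixes a X Y :: "'a::real_algebra_1"
  assumes "a * X = Y * a"
  shows "a * dfall X n l = dfall Y n l * a"
proof (induction n)
  case (Suc n)
  have "a * (X - of_real (real n * l)) = (Y - of_real (real n * l)) * a"
    using assms of_real_mult_commute[of "real n * l" a] by (simp add: left_diff_distrib right_diff_distrib)
  with Suc show ?case
    by (simp flip: mult.assoc) (simp add: mult.assoc)
qed simp

context
  fixes a ad :: "'a::real_algebra_1"
  assumes boson: "a * ad = ad * a + 1"
begin

lemma boson_intertwine:
  assumes "a * c = c * a"
  shows "a * (ad * a + c) = (ad * a + c + 1) * a"
  using assms by (simp add: distrib_left distrib_right boson mult.assoc[symmetric])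

lemma normal_ordered_dfall_Suc:
  fixes r l :: real and n j :: nat
  defines "T \<equiv> \<lambda>k. ad ^ k * dfall (ad * a + of_nat k - of_real (r + l)) n l * a ^ k"
  shows "ad ^ j * dfall (ad * a + of_nat j - of_real r) (Suc n) l * a ^ j
     = T (Suc j) + of_real (real j - r) * T j"
proof -
  define c :: 'a where "c = of_real (real j - r)"
  define D where "D = dfall (ad * a + of_nat j - of_real (r + l)) n l"
  have "a * (of_nat j - of_real (r + l)) = (of_nat j - of_real (r + l)) * a"
    using of_real_mult_commute[of "r + l" a]
    by (simp add: left_diff_distrib right_diff_distrib mult_of_nat_commute)
  then have "a * (ad * a + of_nat j - of_real (r + l)) = (ad * a + of_nat j - of_real (r + l) + 1) * a"
    by (metis boson_intertwine add_diff_eq)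
  then have aD: "a * D = dfall (ad * a + of_nat (Suc j) - of_real (r + l)) n l * a"
    unfolding D_def by (rule dfall_intertwine[THEN trans]) (simp add: algebra_simps)
  have shift: "ad ^ j * (ad * a) * D * a ^ j = T (Suc j)"
  proof -
    have "ad ^ j * (ad * a) * D * a ^ j = ad ^ j * ad * (a * D) * a ^ j"
      by (simp only: mult.assoc)
    also have "\<dots> = T (Suc j)"
      unfolding aD T_def by (simp only: power_Suc2[of ad] power_Suc[of a] mult.assoc)
    finally show ?thesis .
  qed
  have X: "ad * a + of_nat j - of_real r = ad * a + c"
    by (simp add: c_def)
  have "ad * a + c - of_real l = ad * a + of_nat j - of_real (r + l)"
    by (simp add: c_def algebra_simps)
  then have "ad ^ j * dfall (ad * a + of_nat j - of_real r) (Suc n) l * a ^ j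
      = ad ^ j * ((ad * a + c) * D) * a ^ j"
    unfolding X dfall_Suc_left D_def by (simp only:)
  also have "\<dots> = ad ^ j * (ad * a) * D * a ^ j + (ad ^ j * c) * D * a ^ j"
    by (simp add: distrib_left distrib_right mult.assoc)
  also have "\<dots> = T (Suc j) + c * T j"
  proof -
    have "ad ^ j * c = c * ad ^ j"
      unfolding c_def by (rule of_real_mult_commute[symmetric])
    then show ?thesis
      unfolding shift by (simp add: T_def D_def mult.assoc)
  qed
  finally show ?thesis unfolding c_def .
qed

lemma dfall_number_normal_ordered:
  "dfall (ad * a) (m + n) l =
    (\<Sum>j=0..m. of_real (dstirling_rec m j l) * ad ^ j
        * dfall (ad * a + of_nat j - of_real (real m * l)) n l * a ^ j)"
proof (induction m arbitrary: n)
  case 0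
  then show ?case by simp
next
  case (Suc m)
  define T where "T k = ad ^ k * dfall (ad * a + of_nat k - of_real (real (Suc m) * l)) n l * a ^ k"
    for k
  have mSuc: "real m * l + l = real (Suc m) * l"
    by (simp add: algebra_simps)
  have "dfall (ad * a) (Suc m + n) l = dfall (ad * a) (m + Suc n) l"
    by simp
  also have "\<dots> = (\<Sum>j=0..m. of_real (dstirling_rec m j l) * (ad ^ j
        * dfall (ad * a + of_nat j - of_real (real m * l)) (Suc n) l * a ^ j))"
    unfolding Suc.IH by (simp add: mult.assoc)
  also have "\<dots> = (\<Sum>j=0..m. of_real (dstirling_rec m j l)
        * (T (Suc j) + of_real (real j - real m * l) * T j))"
    unfolding normal_ordered_dfall_Suc mSuc T_def ..
  also have "\<dots> = (\<Sum>k=0..Suc m. of_real (dstirling_rec (Suc m) k l) * T k)"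
    by (rule sum_dstirling_rec_Suc[symmetric])
  finally show ?case
    unfolding T_def by (simp add: mult.assoc)
qed

end

theorem theorem2p4:
  fixes a ad :: "'a::real_algebra_1" and l :: real and m n :: nat
  assumes "a * ad - ad * a = 1" and "l \<noteq> 0"
  shows "dfall (ad * a) (m + n) l =
    (\<Sum>j=0..m. of_real (dstirling m j l) * ad ^ j
        * dfall (ad * a + of_nat j - of_real (real m * l)) n l * a ^ j)"
proof -
  have "a * ad = ad * a + 1"
    using assms(1) by (simp add: algebra_simps)
  then show ?thesis
    unfolding dstirling_eq_dstirling_rec by (rule dfall_number_normal_ordered)
qed

end
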